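(* Let $a\in\mathbb R$, $b\in[a,\infty)$, $u\in[-\infty,\infty)$, $v\in(u,\infty]$, $d,L\in\mathbb N$, $l=(l_0,l_1,\dots,l_L)\in\mathbb N^{L+1}$ satisfy $d\ge\sum_{k=1}^Ll_k(l_{k-1}+1)$. Then for all $\theta,\vartheta\in\mathbb R^d$, $$\sup_{x\in[a,b]^{l_0}}\|\mathscr N^{\theta,l}_{u,v}(x)-\mathscr N^{\vartheta,l}_{u,v}(x)\|_\infty\le L\max\{1,|a|,|b|\}(\|l\|_\infty+1)^L\bigl(\max\{1,\|\theta\|_\infty,\|\vartheta\|_\infty\}\bigr)^{L-1}\|\theta-\vartheta\|_\infty.$$
   Context: $\|\cdot\|_\infty$ is the maximum norm on any $\mathbb R^n$ (also applied to $l$). For $r,s\in\mathbb N$, $k\in\mathbb N_0$, $\theta\in\mathbb R^d$ with $d\ge k+rs+r$, $\mathcal A^{\theta,k}_{r,s}\colon\mathbb R^s\to\mathbb R^r$ has $i$-th component $x\mapsto\sum_{j=1}^s\theta_{k+(i-1)s+j}x_j+\theta_{k+rs+i}$. $\mathfrak C_{u,v,n}$ applies $y\mapsto\max\{u,\min\{y,v\}\}$ componentwise on $\mathbb R^n$ (identity if $u=-\infty$, $v=\infty$) and $\mathfrak R_n$ applies $y\mapsto\max\{y,0\}$ componentwise. With $s_k=\sum_{j=1}^kl_j(l_{j-1}+1)$, $\mathscr N^{\theta,l}_{u,v}=\mathfrak C_{u,v,l_L}\circ\mathcal A^{\theta,s_{L-1}}_{l_L,l_{L-1}}\circ\mathfrak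 R_{l_{L-1}}\circ\cdots\circ\mathfrak R_{l_1}\circ\mathcal A^{\theta,0}_{l_1,l_0}\colon\mathbb R^{l_0}\to\mathbb R^{l_L}$ (for $L=1$ just $\mathfrak C_{u,v,l_1}\circ\mathcal A^{\theta,0}_{l_1,l_0}$). *)

theory Defs
  imports "HOL-Analysis.Analysis" "HOL-Library.Extended_Real"
begin

text \<open>Vectors in R^n are real lists of length n; the paper's 1-based component
  theta_m is the list entry theta ! (m - 1).\<close>

definition maxnorm :: "real list \<Rightarrow> real" where
  "maxnorm xs = Max (insert 0 (abs ` set xs))"

definition affine_map :: "real list \<Rightarrow> nat \<Rightarrow> nat \<Rightarrow> nat \<Rightarrow> real list \<Rightarrow> real list" where
  "affine_map \<theta> k r s x =
     map (\<lambda>i. (\<Sum>j<s. \<theta> ! (k + i * s + j) * x ! j) + \<theta> ! (k + r * s + i)) [0..<r]"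

definition clip :: "ereal \<Rightarrow> ereal \<Rightarrow> real \<Rightarrow> real" where
  "clip u v y = real_of_ereal (max u (min (ereal y) v))"

definition relu :: "real list \<Rightarrow> real list" where
  "relu xs = map (\<lambda>y. max y 0) xs"

definition sidx :: "nat list \<Rightarrow> nat \<Rightarrow> nat" where
  "sidx l k = (\<Sum>j\<in>{1..k}. l ! j * (l ! (j - 1) + 1))"

primrec layer :: "real list \<Rightarrow> nat list \<Rightarrow> real list \<Rightarrow> nat \<Rightarrow> real list" where
  "layer \<theta> l x 0 = x"
| "layer \<theta> l x (Suc k) =
     affine_map \<theta> (sidx l k) (l ! Suc k) (l ! k) (if k = 0 then x else relu (layer \<theta> l x k))"

definition realization :: "real list \<Rightarrow> nat list \<Rightarrow> ereal \<Rightarrow> ereal \<Rightarrow> real list \<Rightarrow> real list" where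
  "realization \<theta> l u v x = map (clip u v) (layer \<theta> l x (length l - 1))"

end

theory Submission
  imports Defs
begin

text \<open>Let N = Max (set l), M = max 1 (max \<parallel>\<theta>\<parallel> \<parallel>\<theta>'\<parallel>) and c = max 1 (max |a| |b|). An affine
  layer with at most N inputs and weights bounded by M maps an input of norm r to one of norm
  at most (N + 1) M max 1 r, and ReLU does not increase norms, so the input of layer k + 1 has
  norm at most c ((N + 1) M)^k. Comparing the two networks one layer at a time, the change of
  parameters contributes at most (N + 1) \<parallel>\<theta> - \<theta>'\<parallel> times this norm, while the discrepancy
  already present in the input is amplified by at most N M; ReLU and clipping are 1-Lipschitz.
  Induction then bounds M times the discrepancy after k layers by k c ((N + 1) M)^k \<parallel>\<theta> - \<theta>'\<parallel>.\<close>

abbreviation maxdist :: "real list \<Rightarrow> real list \<Rightarrow> real" where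
  "maxdist xs ys \<equiv> maxnorm (map2 (-) xs ys)"

lemma maxnorm_nonneg: "0 \<le> maxnorm xs"
  unfolding maxnorm_def by (auto intro: Max_ge)

lemma abs_nth_le_maxnorm: "i < length xs \<Longrightarrow> \<bar>xs ! i\<bar> \<le> maxnorm xs"
  unfolding maxnorm_def by (auto intro!: Max_ge)

lemma maxnorm_leI:
  assumes "0 \<le> B" and "\<And>i. i < length xs \<Longrightarrow> \<bar>xs ! i\<bar> \<le> B"
  shows "maxnorm xs \<le> B"
  unfolding maxnorm_def using assms by (auto simp: in_set_conv_nth)

lemma abs_diff_nth_le_maxdist:
  "length ys = length xs \<Longrightarrow> i < length xs \<Longrightarrow> \<bar>xs ! i - ys ! i\<bar> \<le> maxdist xs ys"
  using abs_nth_le_maxnorm[of i "map2 (-) xs ys"] by simp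

lemma maxdist_self: "maxdist xs xs = 0"
  using maxnorm_leI[of 0 "map2 (-) xs xs"] maxnorm_nonneg[of "map2 (-) xs xs"] by simp

lemma maxdist_triangle:
  assumes "length ys = length xs" and "length zs = length xs"
  shows "maxdist xs zs \<le> maxdist xs ys + maxdist ys zs"
proof (rule maxnorm_leI)
  show "0 \<le> maxdist xs ys + maxdist ys zs"
    using maxnorm_nonneg by (simp add: add_nonneg_nonneg)
  fix i assume i: "i < length (map2 (-) xs zs)"
  have "\<bar>xs ! i - zs ! i\<bar> \<le> \<bar>xs ! i - ys ! i\<bar> + \<bar>ys ! i - zs ! i\<bar>" by simp
  also have "\<dots> \<le> maxdist xs ys + maxdist ys zs"
    using i assms abs_diff_nth_le_maxdist[of ys xs i] abs_diff_nth_le_maxdist[of zs ys i]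
    by (intro add_mono) auto
  finally show "\<bar>map2 (-) xs zs ! i\<bar> \<le> maxdist xs ys + maxdist ys zs"
    using i by simp
qed

lemma maxnorm_map_le:
  assumes "\<And>y. \<bar>f y\<bar> \<le> \<bar>y\<bar>"
  shows "maxnorm (map f ys) \<le> maxnorm ys"
proof (rule maxnorm_leI[OF maxnorm_nonneg])
  fix i assume "i < length (map f ys)"
  then show "\<bar>map f ys ! i\<bar> \<le> maxnorm ys"
    using assms[of "ys ! i"] abs_nth_le_maxnorm[of i ys] by simp
qed

lemma maxdist_map_le:
  assumes "\<And>y z. \<bar>f y - f z\<bar> \<le> \<bar>y - z\<bar>" and "length zs = length ys"
  shows "maxdist (map f ys) (map f zs) \<le> maxdist ys zs"
proof (rule maxnorm_leI[OF maxnorm_nonneg])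
  fix i assume "i < length (map2 (-) (map f ys) (map f zs))"
  then have i: "i < length ys" using assms(2) by simp
  then show "\<bar>map2 (-) (map f ys) (map f zs) ! i\<bar> \<le> maxdist ys zs"
    using assms order_trans[OF assms(1) abs_diff_nth_le_maxdist] by simp
qed

lemma abs_sum_mult_le:
  fixes p q :: "nat \<Rightarrow> real"
  assumes "\<And>j. j < s \<Longrightarrow> \<bar>p j\<bar> \<le> P" and "\<And>j. j < s \<Longrightarrow> \<bar>q j\<bar> \<le> Q" and "0 \<le> P"
  shows "\<bar>\<Sum>j<s. p j * q j\<bar> \<le> real s * P * Q"
proof -
  have "\<bar>\<Sum>j<s. p j * q j\<bar> \<le> (\<Sum>j<s. \<bar>p j\<bar> * \<bar>q j\<bar>)"
    unfolding abs_mult[symmetric] by (rule sum_abs)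
  also have "\<dots> \<le> (\<Sum>j<s. P * Q)"
    using assms by (intro sum_mono mult_mono) auto
  finally show ?thesis by simp
qed

lemma mult_add_less_mult:
  fixes i j r s :: nat
  assumes "i < r" and "j < s"
  shows "i * s + j < r * s"
proof -
  have "i * s + j < Suc i * s" using assms(2) by simp
  also have "\<dots> \<le> r * s" using assms(1) by (intro mult_le_mono1) simp
  finally show ?thesis .
qed

lemma length_affine_map [simp]: "length (affine_map t k r s z) = r"
  by (simp add: affine_map_def)

lemma nth_affine_map:
  "i < r \<Longrightarrow> affine_map t k r s z ! i = (\<Sum>j<s. t ! (k + i * s + j) * z ! j) + t ! (k + r * s + i)"
  by (simp add: affine_map_def)

lemma affine_map_diff_params:
  assumes "k + r * s + r \<le> length t" and "length t' = length t"
  shows "map2 (-) (affine_map t k r s z) (affine_map t' k r s z)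
    = affine_map (map2 (-) t t') k r s z"
proof (rule nth_equalityI)
  fix i assume "i < length (map2 (-) (affine_map t k r s z) (affine_map t' k r s z))"
  then have i: "i < r" by simp
  have "k + i * s + j < length t" if "j < s" for j
    using mult_add_less_mult[OF i that] assms(1) by linarith
  moreover have "k + r * s + i < length t" using i assms(1) by linarith
  ultimately show "map2 (-) (affine_map t k r s z) (affine_map t' k r s z) ! i
      = affine_map (map2 (-) t t') k r s z ! i"
    using i assms(2) by (simp add: nth_affine_map sum_subtractf left_diff_distrib)
qed simp

lemma maxnorm_affine_map_le:
  assumes "k + r * s + r \<le> length t" and "length z = s" and "real s \<le> N" and "maxnorm t \<le> M"
  shows "maxnorm (affine_map t k r s z) \<le> (N + 1) * M * max 1 (maxnorm z)"
proof (rule maxnorm_leI)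
  have M0: "0 \<le> M" and N0: "0 \<le> N"
    using maxnorm_nonneg[of t] assms(3,4) of_nat_0_le_iff[of s] by linarith+
  then show "0 \<le> (N + 1) * M * max 1 (maxnorm z)" by simp
  fix i assume "i < length (affine_map t k r s z)"
  then have i: "i < r" by simp
  have weights: "\<bar>\<Sum>j<s. t ! (k + i * s + j) * z ! j\<bar> \<le> real s * M * maxnorm z"
  proof (rule abs_sum_mult_le[OF _ _ M0])
    fix j assume j: "j < s"
    have "k + i * s + j < length t" using mult_add_less_mult[OF i j] assms(1) by linarith
    then show "\<bar>t ! (k + i * s + j)\<bar> \<le> M" using abs_nth_le_maxnorm assms(4) order_trans by blast
    show "\<bar>z ! j\<bar> \<le> maxnorm z" using j assms(2) abs_nth_le_maxnorm by simp
  qed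
  have "k + r * s + i < length t" using i assms(1) by linarith
  then have bias: "\<bar>t ! (k + r * s + i)\<bar> \<le> M"
    using abs_nth_le_maxnorm assms(4) order_trans by blast
  have "real s * M * maxnorm z \<le> N * M * max 1 (maxnorm z)"
    using M0 N0 assms(3) maxnorm_nonneg[of z] by (intro mult_mono) auto
  moreover have "M \<le> M * max 1 (maxnorm z)"
    using M0 by (metis max.cobounded1 mult.right_neutral mult_left_mono)
  ultimately show "\<bar>affine_map t k r s z ! i\<bar> \<le> (N + 1) * M * max 1 (maxnorm z)"
    using weights bias i by (simp add: nth_affine_map algebra_simps)
qed

lemma maxdist_affine_map_params_le:
  assumes "k + r * s + r \<le> length t" and "length t' = length t" and "length z = s"
    and "real s \<le> N"
  shows "maxdist (affine_map t k r s z) (affine_map t' k r s z)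
    \<le> (N + 1) * maxdist t t' * max 1 (maxnorm z)"
  unfolding affine_map_diff_params[OF assms(1,2)]
  using assms by (intro maxnorm_affine_map_le) auto

lemma maxdist_affine_map_input_le:
  assumes "k + r * s + r \<le> length t" and "length z = s" and "length z' = s"
    and "real s \<le> N" and "maxnorm t \<le> M"
  shows "maxdist (affine_map t k r s z) (affine_map t k r s z') \<le> N * M * maxdist z z'"
proof (rule maxnorm_leI)
  have M0: "0 \<le> M" and N0: "0 \<le> N"
    using maxnorm_nonneg[of t] assms(4,5) of_nat_0_le_iff[of s] by linarith+
  then show "0 \<le> N * M * maxdist z z'" using maxnorm_nonneg by simp
  fix i assume "i < length (map2 (-) (affine_map t k r s z) (affine_map t k r s z'))"
  then have i: "i < r" by simp
  have "\<bar>\<Sum>j<s. t ! (k + i * s + j) * (z ! j - z' ! j)\<bar> \<le> real s * M * maxdist z z'"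
  proof (rule abs_sum_mult_le[OF _ _ M0])
    fix j assume j: "j < s"
    have "k + i * s + j < length t" using mult_add_less_mult[OF i j] assms(1) by linarith
    then show "\<bar>t ! (k + i * s + j)\<bar> \<le> M" using abs_nth_le_maxnorm assms(5) order_trans by blast
    show "\<bar>z ! j - z' ! j\<bar> \<le> maxdist z z'" using j assms(2,3) abs_diff_nth_le_maxdist by simp
  qed
  also have "\<dots> \<le> N * M * maxdist z z'"
    using M0 assms(4) maxnorm_nonneg by (intro mult_right_mono) auto
  finally show "\<bar>map2 (-) (affine_map t k r s z) (affine_map t k r s z') ! i\<bar> \<le> N * M * maxdist z z'"
    using i by (simp add: nth_affine_map sum_subtractf right_diff_distrib)
qed

text \<open>No hypothesis u < v is needed: otherwise the clipping is constant.\<close>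

lemma abs_clip_diff_le: "\<bar>clip u v y - clip u v y'\<bar> \<le> \<bar>y - y'\<bar>"
  by (cases u rule: ereal_cases; cases v rule: ereal_cases)
     (auto simp: clip_def max_def min_def abs_if)

lemma maxnorm_le_of_bounds:
  assumes "\<forall>y\<in>set x. a \<le> y \<and> y \<le> b"
  shows "maxnorm x \<le> max \<bar>a\<bar> \<bar>b\<bar>"
proof (rule maxnorm_leI)
  fix i assume "i < length x"
  then have "a \<le> x ! i" and "x ! i \<le> b" using assms nth_mem by blast+
  then show "\<bar>x ! i\<bar> \<le> max \<bar>a\<bar> \<bar>b\<bar>" by linarith
qed simp

lemma sidx_Suc: "sidx l (Suc k) = sidx l k + l ! Suc k * (l ! k + 1)"
  by (simp add: sidx_def)

lemma sidx_step_le: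
  assumes "k < L"
  shows "sidx l k + l ! Suc k * l ! k + l ! Suc k \<le> sidx l L"
proof -
  have "sidx l (Suc k) \<le> sidx l L"
    unfolding sidx_def using assms by (intro sum_mono2) auto
  then show ?thesis by (simp add: sidx_Suc algebra_simps)
qed

definition layer_input :: "real list \<Rightarrow> nat list \<Rightarrow> real list \<Rightarrow> nat \<Rightarrow> real list" where
  "layer_input t l x k = (if k = 0 then x else relu (layer t l x k))"

lemma layer_Suc_eq:
  "layer t l x (Suc k) = affine_map t (sidx l k) (l ! Suc k) (l ! k) (layer_input t l x k)"
  by (simp add: layer_input_def)

lemma length_layer: "length x = l ! 0 \<Longrightarrow> length (layer t l x k) = l ! k"
  by (cases k) auto

lemma length_layer_input: "length x = l ! 0 \<Longrightarrow> length (layer_input t l x k) = l ! k"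
  by (simp add: layer_input_def relu_def length_layer)

lemma maxdist_layer_input_le:
  assumes "length x = l ! 0"
  shows "maxdist (layer_input t l x k) (layer_input t' l x k) \<le> maxdist (layer t l x k) (layer t' l x k)"
proof (cases "k = 0")
  case False
  then show ?thesis
    unfolding layer_input_def relu_def using assms
    by (simp add: maxdist_map_le length_layer max_def abs_if)
qed (simp add: layer_input_def)

lemma maxnorm_layer_input_le:
  assumes "length x = l ! 0" and "maxnorm x \<le> c" and "1 \<le> c"
    and "sidx l L \<le> length t" and "maxnorm t \<le> M" and "1 \<le> M"
    and "\<And>k. k \<le> L \<Longrightarrow> real (l ! k) \<le> N" and "k \<le> L"
  shows "maxnorm (layer_input t l x k) \<le> c * ((N + 1) * M) ^ k"
  using assms(8)
proof (induction k)
  case 0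
  then show ?case using assms(2) by (simp add: layer_input_def)
next
  case (Suc k)
  have N0: "0 \<le> N" using assms(7)[of 0] by linarith
  have "1 \<le> c * ((N + 1) * M) ^ k"
    using assms(3,6) N0 by (simp add: mult_ge1_I one_le_power)
  then have input: "max 1 (maxnorm (layer_input t l x k)) \<le> c * ((N + 1) * M) ^ k"
    using Suc by simp
  have "maxnorm (layer_input t l x (Suc k)) \<le> maxnorm (layer t l x (Suc k))"
    unfolding layer_input_def relu_def by (simp add: maxnorm_map_le)
  also have "\<dots> \<le> (N + 1) * M * max 1 (maxnorm (layer_input t l x k))"
    unfolding layer_Suc_eq
    using sidx_step_le[of k L l] Suc.prems assms(1,4,5,7) length_layer_input
    by (intro maxnorm_affine_map_le) auto
  also have "\<dots> \<le> (N + 1) * M * (c * ((N + 1) * M) ^ k)"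
    using input assms(6) N0 by (intro mult_left_mono) auto
  finally show ?case by (simp add: algebra_simps)
qed

lemma maxdist_layer_Suc_le:
  assumes "length x = l ! 0" and "sidx l k + l ! Suc k * l ! k + l ! Suc k \<le> length \<theta>"
    and "length \<theta>' = length \<theta>" and "maxnorm \<theta>' \<le> M" and "real (l ! k) \<le> N"
  shows "maxdist (layer \<theta> l x (Suc k)) (layer \<theta>' l x (Suc k))
    \<le> (N + 1) * maxdist \<theta> \<theta>' * max 1 (maxnorm (layer_input \<theta> l x k))
      + N * M * maxdist (layer_input \<theta> l x k) (layer_input \<theta>' l x k)"
proof -
  define A where "A = (\<lambda>t z. affine_map t (sidx l k) (l ! Suc k) (l ! k) z)"
  let ?z = "layer_input \<theta> l x k" and ?z' = "layer_input \<theta>' l x k"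
  have "maxdist (layer \<theta> l x (Suc k)) (layer \<theta>' l x (Suc k))
      \<le> maxdist (A \<theta> ?z) (A \<theta>' ?z) + maxdist (A \<theta>' ?z) (A \<theta>' ?z')"
    unfolding layer_Suc_eq A_def by (rule maxdist_triangle) simp_all
  also have "\<dots> \<le> (N + 1) * maxdist \<theta> \<theta>' * max 1 (maxnorm ?z) + N * M * maxdist ?z ?z'"
    unfolding A_def using assms length_layer_input[OF assms(1)]
    by (intro add_mono maxdist_affine_map_params_le maxdist_affine_map_input_le) auto
  finally show ?thesis .
qed

text \<open>The factor M on the left avoids the exponent k - 1, which is truncated at k = 0.\<close>

lemma maxdist_layer_le:
  assumes "length x = l ! 0" and "maxnorm x \<le> c" and "1 \<le> c"
    and "sidx l L \<le> length \<theta>" and "length \<theta>' = length \<theta>"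
    and "maxnorm \<theta> \<le> M" and "maxnorm \<theta>' \<le> M" and "1 \<le> M"
    and "\<And>k. k \<le> L \<Longrightarrow> real (l ! k) \<le> N" and "k \<le> L"
  shows "M * maxdist (layer \<theta> l x k) (layer \<theta>' l x k)
    \<le> real k * (c * ((N + 1) * M) ^ k * maxdist \<theta> \<theta>')"
  using assms(10)
proof (induction k)
  case 0
  then show ?case by (simp add: maxdist_self)
next
  case (Suc k)
  define D where "D = maxdist \<theta> \<theta>'"
  define P where "P = c * ((N + 1) * M) ^ k * D"
  let ?z = "layer_input \<theta> l x k" and ?z' = "layer_input \<theta>' l x k"
  have N0: "0 \<le> N" using assms(9)[of 0] by linarith
  have D0: "0 \<le> D" by (simp add: D_def maxnorm_nonneg)
  have input: "max 1 (maxnorm ?z) \<le> c * ((N + 1) * M) ^ k"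
    using maxnorm_layer_input_le[OF assms(1-4,6,8,9), of k] Suc.prems assms(3,8) N0
    by (simp add: mult_ge1_I one_le_power)
  have input_diff: "M * maxdist ?z ?z' \<le> real k * P"
    using Suc maxdist_layer_input_le[OF assms(1), of \<theta> k \<theta>'] assms(8)
    by (simp add: P_def D_def order_trans[OF mult_left_mono])
  have step: "maxdist (layer \<theta> l x (Suc k)) (layer \<theta>' l x (Suc k))
      \<le> (N + 1) * D * max 1 (maxnorm ?z) + N * M * maxdist ?z ?z'"
    unfolding D_def using sidx_step_le[of k L l] Suc.prems assms
    by (intro maxdist_layer_Suc_le) auto
  have "M * maxdist (layer \<theta> l x (Suc k)) (layer \<theta>' l x (Suc k))
      \<le> M * ((N + 1) * D * max 1 (maxnorm ?z) + N * M * maxdist ?z ?z')"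
    using assms(8) by (intro mult_left_mono[OF step]) simp
  also have "\<dots> = (N + 1) * M * D * max 1 (maxnorm ?z) + N * M * (M * maxdist ?z ?z')"
    by (simp add: algebra_simps)
  also have "\<dots> \<le> (N + 1) * M * P + (N + 1) * M * (real k * P)"
  proof (rule add_mono)
    have "(N + 1) * M * D * max 1 (maxnorm ?z) \<le> (N + 1) * M * D * (c * ((N + 1) * M) ^ k)"
      using input assms(8) N0 D0 by (intro mult_left_mono) auto
    then show "(N + 1) * M * D * max 1 (maxnorm ?z) \<le> (N + 1) * M * P"
      by (simp add: P_def algebra_simps)
    show "N * M * (M * maxdist ?z ?z') \<le> (N + 1) * M * (real k * P)"
      by (rule mult_mono[OF _ input_diff]) (use assms(8) N0 in \<open>auto simp: maxnorm_nonneg\<close>)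
  qed
  also have "\<dots> = real (Suc k) * (c * ((N + 1) * M) ^ Suc k * D)"
    by (simp add: P_def algebra_simps)
  finally show ?case unfolding D_def .
qed

lemma maxdist_realization_le:
  assumes "length x = l ! 0" and "length l = L + 1"
  shows "maxdist (realization \<theta> l u v x) (realization \<theta>' l u v x)
    \<le> maxdist (layer \<theta> l x L) (layer \<theta>' l x L)"
  unfolding realization_def using assms
  by (simp add: maxdist_map_le abs_clip_diff_le length_layer)

theorem corollary2p37:
  fixes a b :: real and u v :: ereal and d L :: nat and l :: "nat list"
    and \<theta> \<theta>' :: "real list"
  assumes "a \<le> b" and "u < v" and "d \<ge> 1" and "L \<ge> 1"
    and "length l = L + 1" and "\<forall>i\<in>set l. i \<ge> 1"
    and "d \<ge> (\<Sum>k\<in>{1..L}. l ! k * (l ! (k - 1) + 1))"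
    and "length \<theta> = d" and "length \<theta>' = d"
  shows "(SUP x\<in>{x. length x = l ! 0 \<and> (\<forall>y\<in>set x. a \<le> y \<and> y \<le> b)}.
            maxnorm (map2 (-) (realization \<theta> l u v x) (realization \<theta>' l u v x)))
         \<le> real L * max 1 (max \<bar>a\<bar> \<bar>b\<bar>) * (real (Max (set l)) + 1) ^ L
            * (max 1 (max (maxnorm \<theta>) (maxnorm \<theta>'))) ^ (L - 1)
            * maxnorm (map2 (-) \<theta> \<theta>')"
proof (rule cSUP_least)
  let ?S = "{x. length x = l ! 0 \<and> (\<forall>y\<in>set x. a \<le> y \<and> y \<le> b)}"
  show "?S \<noteq> {}" using assms(1) by (auto intro!: exI[of _ "replicate (l ! 0) a"])
  define c where "c = max 1 (max \<bar>a\<bar> \<bar>b\<bar>)"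
  define N where "N = real (Max (set l))"
  define M where "M = max 1 (max (maxnorm \<theta>) (maxnorm \<theta>'))"
  define D where "D = maxdist \<theta> \<theta>'"
  fix x assume "x \<in> ?S"
  then have x: "length x = l ! 0" "maxnorm x \<le> c"
    using maxnorm_le_of_bounds[of x a b] by (auto simp: c_def)
  have sizes: "real (l ! k) \<le> N" if "k \<le> L" for k
    using that assms(5) by (simp add: N_def)
  have "M * maxdist (layer \<theta> l x L) (layer \<theta>' l x L) \<le> real L * (c * ((N + 1) * M) ^ L * D)"
    unfolding D_def using x sizes assms(7-9)
    by (intro maxdist_layer_le) (auto simp: sidx_def c_def M_def)
  also have "\<dots> = M * (real L * c * (N + 1) ^ L * M ^ (L - 1) * D)"
    using assms(4) by (cases L) (auto simp: power_mult_distrib)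
  finally have "maxdist (layer \<theta> l x L) (layer \<theta>' l x L) \<le> real L * c * (N + 1) ^ L * M ^ (L - 1) * D"
    by (rule mult_left_le_imp_le) (simp add: M_def)
  then show "maxdist (realization \<theta> l u v x) (realization \<theta>' l u v x)
      \<le> real L * max 1 (max \<bar>a\<bar> \<bar>b\<bar>) * (real (Max (set l)) + 1) ^ L
        * (max 1 (max (maxnorm \<theta>) (maxnorm \<theta>'))) ^ (L - 1) * maxnorm (map2 (-) \<theta> \<theta>')"
    unfolding c_def N_def M_def D_def by (rule order_trans[OF maxdist_realization_le[OF x(1) assms(5)]])
qed

end
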